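(* Let $K>0$, $\psi>0$, $E_{\max}>0$, $C>0$, and define, for $Q>\max\{1,C/E_{\max}\}$, $$\beta(Q)=K\sqrt{\frac{(e^{\psi Q}-e^{\psi})^3}{E_{\max}-C/Q}}.$$ On any interval of such $Q$ on which $3\psi^2e^{\psi}Q^2-2QE_{\max}+C\ge 0$ holds, the function $\beta$ is convex. Consequently, for every fixed $\kappa>0$ and $\varrho\in(0,1)$, the $\varrho$-quantile of $\mathrm{Gamma}(\kappa,\beta(Q))$ (shape $\kappa$, scale $\beta(Q)$) is a convex function of $Q$ on that interval.
   Context: For a Gamma distribution with shape $\kappa$ and scale $\beta$, the $\varrho$-quantile is $\beta\cdot\gamma^{-1}(\kappa,\Gamma(\kappa)\varrho)$. Here $\gamma(s,x)=\int_0^x t^{s-1}e^{-t}\,dt$ is the lower incomplete gamma function, $\gamma^{-1}$ denotes its inverse in the second argument, and $\Gamma$ is the Gamma function. *)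

theory Defs
  imports "HOL-Analysis.Analysis"
begin

definition lower_inc_gamma :: "real \<Rightarrow> real \<Rightarrow> real" where
  "lower_inc_gamma s x = integral {0..x} (\<lambda>t. t powr (s - 1) * exp (- t))"

text \<open>Inverse of the lower incomplete gamma function in its second argument
  (on x >= 0, where it is strictly increasing).\<close>
definition inv_lower_inc_gamma :: "real \<Rightarrow> real \<Rightarrow> real" where
  "inv_lower_inc_gamma s y = (THE x. 0 \<le> x \<and> lower_inc_gamma s x = y)"

definition gamma_quantile :: "real \<Rightarrow> real \<Rightarrow> real \<Rightarrow> real" where
  "gamma_quantile \<kappa> \<beta> \<rho> = \<beta> * inv_lower_inc_gamma \<kappa> (Gamma \<kappa> * \<rho>)"

definition beta_fun :: "real \<Rightarrow> real \<Rightarrow> real \<Rightarrow> real \<Rightarrow> real \<Rightarrow> real" where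
  "beta_fun K \<psi> Emax C Q = K * sqrt ((exp (\<psi> * Q) - exp \<psi>) ^ 3 / (Emax - C / Q))"

end

theory Submission
  imports Defs
begin

text \<open>Write \<open>\<beta> Q = K * u Q powr (3/2) * v Q powr (-1/2)\<close> with \<open>u Q = exp (\<psi> Q) - exp \<psi>\<close>
  convex and \<open>v Q = Emax - C / Q\<close> concave, both positive. For \<open>p \<ge> 1\<close> the map
  \<open>(x, y) \<mapsto> x powr p * y powr (1 - p)\<close> is the perspective of \<open>x powr p\<close>, hence jointly convex;
  it is increasing in \<open>x\<close> and decreasing in \<open>y\<close>, so it turns a convex and a concave function
  into a convex one. The quantile is \<open>\<beta> Q\<close> times the
  constant \<open>\<gamma>\<^sup>-\<^sup>1(\<kappa>, \<Gamma>(\<kappa>) \<rho>)\<close>, which is a well-defined nonnegative number because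
  \<open>\<gamma>(\<kappa>, -)\<close> increases strictly and continuously from \<open>0\<close> to \<open>\<Gamma>(\<kappa>)\<close>.\<close>

lemma mult_powr_divide_eq:
  fixes y z p :: real
  assumes "y > 0" "z > 0"
  shows "y * (z / y) powr p = z powr p * y powr (1 - p)"
  using assms by (simp add: powr_divide powr_diff)

text \<open>Since \<open>x powr p * y powr (1 - p) = y * (x / y) powr p\<close>, this is convexity of \<open>x powr p\<close>
  at the points \<open>a / b\<close>, \<open>c / d\<close> with the weights \<open>1 - t\<close>, \<open>t\<close> rescaled by \<open>b\<close>, \<open>d\<close>.\<close>
lemma powr_mult_powr_convex_combination_le:
  fixes p a b c d t :: real
  assumes "p \<ge> 1" "a > 0" "b > 0" "c > 0" "d > 0" "0 \<le> t" "t \<le> 1"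
  shows "((1 - t) * a + t * c) powr p * ((1 - t) * b + t * d) powr (1 - p)
    \<le> (1 - t) * (a powr p * b powr (1 - p)) + t * (c powr p * d powr (1 - p))"
proof -
  have comb_pos: "(1 - t) * x + t * w > 0" if "x > 0" "w > 0" for x w
    using assms that by (cases "t < 1") (auto intro: add_pos_nonneg add_nonneg_pos)
  define y where "y = (1 - t) * b + t * d"
  define \<mu> where "\<mu> = t * d / y"
  have y: "y > 0" using assms by (simp add: y_def comb_pos)
  have weight_d: "y * \<mu> = t * d" using y by (simp add: \<mu>_def)
  then have weight_b: "y * (1 - \<mu>) = (1 - t) * b" by (simp add: right_diff_distrib y_def)
  note weights = weight_b weight_d
  have \<mu>: "0 \<le> \<mu>" "\<mu> \<le> 1"
    using weights assms y zero_le_mult_iff[of y \<mu>] zero_le_mult_iff[of y "1 - \<mu>"] by auto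
  have "y * ((1 - \<mu>) * (a / b) + \<mu> * (c / d)) = (y * (1 - \<mu>)) * (a / b) + (y * \<mu>) * (c / d)"
    by (simp only: distrib_left mult.assoc)
  also have "\<dots> = (1 - t) * a + t * c" using assms by (simp add: weights)
  finally have mid: "(1 - \<mu>) * (a / b) + \<mu> * (c / d) = ((1 - t) * a + t * c) / y"
    using y by (simp add: eq_divide_eq mult.commute)
  have "((1 - t) * a + t * c) powr p * y powr (1 - p) = y * (((1 - t) * a + t * c) / y) powr p"
    using assms y by (simp add: mult_powr_divide_eq comb_pos)
  also have "\<dots> \<le> y * ((1 - \<mu>) * (a / b) powr p + \<mu> * (c / d) powr p)"
    using convex_onD[OF powr_convex[OF assms(1)] \<mu>, of "a / b" "c / d"] assms y mid
    by simp
  also have "\<dots> = (y * (1 - \<mu>)) * (a / b) powr p + (y * \<mu>) * (c / d) powr p"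
    by (simp add: algebra_simps)
  also have "\<dots> = (1 - t) * (a powr p * b powr (1 - p)) + t * (c powr p * d powr (1 - p))"
    using assms by (simp add: weights mult.assoc mult_powr_divide_eq)
  finally show ?thesis by (simp add: y_def)
qed

lemma convex_on_powr_mult_powr:
  fixes g h :: "'a::real_vector \<Rightarrow> real" and p :: real
  assumes p: "p \<ge> 1" and g: "convex_on S g" and h: "concave_on S h"
    and g_pos: "\<And>x. x \<in> S \<Longrightarrow> g x > 0" and h_pos: "\<And>x. x \<in> S \<Longrightarrow> h x > 0"
  shows "convex_on S (\<lambda>x. g x powr p * h x powr (1 - p))"
proof (rule convex_onI)
  show S: "convex S" using g by (rule convex_on_imp_convex)
  fix t :: real and x y assume t: "0 < t" "t < 1" and x: "x \<in> S" and y: "y \<in> S"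
  define z where "z = (1 - t) *\<^sub>R x + t *\<^sub>R y"
  have z: "z \<in> S" using convexD[OF S x y, of "1 - t" t] t by (simp add: z_def)
  have gz: "g z \<le> (1 - t) * g x + t * g y"
    using convex_onD[OF g, of t x y] t x y by (simp add: z_def)
  have hz: "(1 - t) * h x + t * h y \<le> h z"
    using concave_onD[OF h, of t x y] t x y by (simp add: z_def)
  have "(1 - t) * h x + t * h y > 0"
    using t h_pos[OF x] h_pos[OF y] by (intro add_pos_pos) auto
  then have "g z powr p * h z powr (1 - p)
      \<le> ((1 - t) * g x + t * g y) powr p * ((1 - t) * h x + t * h y) powr (1 - p)"
    using p gz hz g_pos[OF z] by (intro mult_mono powr_mono2 powr_mono2') auto
  also have "\<dots> \<le> (1 - t) * (g x powr p * h x powr (1 - p)) + t * (g y powr p * h y powr (1 - p))"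
    using p t g_pos[OF x] g_pos[OF y] h_pos[OF x] h_pos[OF y]
    by (intro powr_mult_powr_convex_combination_le) auto
  finally show "g ((1 - t) *\<^sub>R x + t *\<^sub>R y) powr p * h ((1 - t) *\<^sub>R x + t *\<^sub>R y) powr (1 - p)
      \<le> (1 - t) * (g x powr p * h x powr (1 - p)) + t * (g y powr p * h y powr (1 - p))"
    by (simp add: z_def)
qed

lemma convex_on_eq:
  assumes "convex_on S f" "\<And>x. x \<in> S \<Longrightarrow> f x = g x"
  shows "convex_on S g"
  using assms unfolding convex_on_def convex_def by auto

lemma sqrt_power3_divide_eq_powr:
  fixes u v :: real
  assumes "u > 0" "v > 0"
  shows "sqrt (u ^ 3 / v) = u powr (3 / 2) * v powr (1 - 3 / 2)"
proof -
  have "sqrt (u ^ 3 / v) = (u powr 3 / v) powr (1 / 2)"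
    using assms by (simp add: powr_half_sqrt powr_numeral)
  also have "\<dots> = u powr (3 / 2) * v powr (1 - 3 / 2)"
    using assms by (simp add: powr_divide powr_powr powr_minus_divide del: powr_numeral)
  finally show ?thesis .
qed

lemma convex_on_exp_mult_diff:
  fixes a c :: real
  assumes "convex S"
  shows "convex_on S (\<lambda>x. exp (a * x) - c)"
proof (rule f''_ge0_imp_convex[OF assms])
  fix x :: real
  show "((\<lambda>x. exp (a * x) - c) has_real_derivative a * exp (a * x)) (at x)"
    by (auto intro!: derivative_eq_intros)
  show "((\<lambda>x. a * exp (a * x)) has_real_derivative a\<^sup>2 * exp (a * x)) (at x)"
    by (auto intro!: derivative_eq_intros simp: power2_eq_square)
  show "0 \<le> a\<^sup>2 * exp (a * x)" by simp
qed

lemma concave_on_diff_divide: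
  fixes c C :: real
  assumes "C \<ge> 0" "convex S" "S \<subseteq> {0<..}"
  shows "concave_on S (\<lambda>x. c - C / x)"
proof -
  have "convex_on S (\<lambda>x. C * inverse x)"
    using assms by (intro convex_on_cmul convex_on_inverse)
  then show ?thesis
    using assms by (auto intro!: concave_on_diff simp: concave_on_const divide_inverse)
qed

lemma convex_on_beta_fun:
  fixes K \<psi> Emax C :: real
  assumes "K \<ge> 0" "\<psi> > 0" "C \<ge> 0" "convex I"
    and "\<And>Q. Q \<in> I \<Longrightarrow> 1 < Q" "\<And>Q. Q \<in> I \<Longrightarrow> C / Q < Emax"
  shows "convex_on I (beta_fun K \<psi> Emax C)"
proof -
  have u_pos: "exp (\<psi> * Q) - exp \<psi> > 0" if "Q \<in> I" for Q
    using assms(2) assms(5)[OF that] by simp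
  have v_pos: "Emax - C / Q > 0" if "Q \<in> I" for Q
    using assms(6)[OF that] by simp
  have "convex_on I (\<lambda>Q. K * ((exp (\<psi> * Q) - exp \<psi>) powr (3 / 2) * (Emax - C / Q) powr (1 - 3 / 2)))"
  proof (intro convex_on_cmul convex_on_powr_mult_powr)
    show "convex_on I (\<lambda>Q. exp (\<psi> * Q) - exp \<psi>)"
      using assms(4) by (rule convex_on_exp_mult_diff)
    show "concave_on I (\<lambda>Q. Emax - C / Q)"
      using assms(3,4,5) by (intro concave_on_diff_divide) force+
  qed (use assms(1) u_pos v_pos in auto)
  then show ?thesis
  proof (rule convex_on_eq)
    fix Q assume "Q \<in> I"
    then show "K * ((exp (\<psi> * Q) - exp \<psi>) powr (3 / 2) * (Emax - C / Q) powr (1 - 3 / 2))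
        = beta_fun K \<psi> Emax C Q"
      using u_pos v_pos by (simp add: beta_fun_def sqrt_power3_divide_eq_powr)
  qed
qed

lemma gamma_integrand_has_integral:
  fixes s :: real
  assumes "s > 0"
  shows "((\<lambda>t. t powr (s - 1) * exp (- t)) has_integral Gamma s) {0..}"
  using Gamma_integral_real[OF assms] by (simp add: exp_minus field_simps)

lemma gamma_integrand_set_integrable:
  fixes s :: real
  assumes "s > 0"
  shows "set_integrable lebesgue {0..} (\<lambda>t. t powr (s - 1) * exp (- t))"
  by (rule nonnegative_absolutely_integrable_1)
    (use gamma_integrand_has_integral[OF assms] in auto)

lemma gamma_integrand_integrable_on:
  fixes s a b :: real
  assumes "s > 0" "a \<ge> 0"
  shows "(\<lambda>t. t powr (s - 1) * exp (- t)) integrable_on {a..b}"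
proof (rule set_lebesgue_integral_eq_integral(1))
  show "set_integrable lebesgue {a..b} (\<lambda>t. t powr (s - 1) * exp (- t))"
    using assms by (intro set_integrable_subset[OF gamma_integrand_set_integrable]) auto
qed

lemma tendsto_lower_inc_gamma:
  fixes s :: real
  assumes "s > 0"
  shows "(lower_inc_gamma s \<longlongrightarrow> Gamma s) at_top"
proof -
  let ?f = "\<lambda>t::real. t powr (s - 1) * exp (- t)"
  have int: "set_integrable lebesgue {0..} ?f"
    using assms by (rule gamma_integrand_set_integrable)
  have "set_integrable lebesgue {0..b} ?f" for b
    by (rule set_integrable_subset[OF int]) auto
  then have "set_lebesgue_integral lebesgue {0..b} ?f = lower_inc_gamma s b" for b
    unfolding lower_inc_gamma_def by (rule set_lebesgue_integral_eq_integral(2))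
  moreover have "set_lebesgue_integral lebesgue {0..} ?f = Gamma s"
    using set_lebesgue_integral_eq_integral(2)[OF int] gamma_integrand_has_integral[OF assms]
    by (simp add: integral_unique)
  ultimately show ?thesis
    using tendsto_set_lebesgue_integral_at_top[OF _ int] by simp
qed

lemma continuous_on_lower_inc_gamma:
  fixes s b :: real
  assumes "s > 0"
  shows "continuous_on {0..b} (lower_inc_gamma s)"
  unfolding lower_inc_gamma_def
  by (intro indefinite_integral_continuous_1 gamma_integrand_integrable_on assms order_refl)

lemma lower_inc_gamma_strict_mono:
  fixes s x y :: real
  assumes "s > 0" "0 \<le> x" "x < y"
  shows "lower_inc_gamma s x < lower_inc_gamma s y"
proof -
  let ?f = "\<lambda>t::real. t powr (s - 1) * exp (- t)"
  define m where "m = (x + y) / 2"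
  have m: "x < m" "m < y" "0 < m" using assms by (auto simp: m_def)
  have "continuous_on {m..y} ?f"
    using m by (intro continuous_intros) auto
  then have "0 < integral {m..y} ?f"
    using integral_less_real[of m y "\<lambda>_. 0" ?f] m by auto
  also have "\<dots> \<le> integral {x..y} ?f"
    using m assms by (intro integral_subset_le gamma_integrand_integrable_on) auto
  finally have "0 < integral {x..y} ?f" .
  moreover have "lower_inc_gamma s x + integral {x..y} ?f = lower_inc_gamma s y"
    unfolding lower_inc_gamma_def
    using assms by (intro Henstock_Kurzweil_Integration.integral_combine gamma_integrand_integrable_on) auto
  ultimately show ?thesis by linarith
qed

lemma ex1_lower_inc_gamma_eq:
  fixes s c :: real
  assumes "s > 0" "0 \<le> c" "c < Gamma s"
  shows "\<exists>!x. 0 \<le> x \<and> lower_inc_gamma s x = c"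
proof -
  have "eventually (\<lambda>b. c < lower_inc_gamma s b \<and> 0 \<le> b) at_top"
    using order_tendstoD(1)[OF tendsto_lower_inc_gamma[OF assms(1)] assms(3)]
    by (intro eventually_conj eventually_ge_at_top)
  then obtain b where b: "c < lower_inc_gamma s b" "0 \<le> b"
    by (auto simp: eventually_at_top_linorder)
  then obtain x where "x \<in> {0..b}" "lower_inc_gamma s x = c"
    using IVT'[of "lower_inc_gamma s" 0 c b] continuous_on_lower_inc_gamma[OF assms(1)] assms(2)
    by (auto simp: lower_inc_gamma_def)
  moreover have "x = x'" if "0 \<le> x" "0 \<le> x'" "lower_inc_gamma s x = lower_inc_gamma s x'" for x x'
    using lower_inc_gamma_strict_mono[OF assms(1)] that by (metis less_irrefl linorder_neqE)
  ultimately show ?thesis by auto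
qed

lemma inv_lower_inc_gamma_nonneg:
  fixes s c :: real
  assumes "s > 0" "0 \<le> c" "c < Gamma s"
  shows "0 \<le> inv_lower_inc_gamma s c"
  using theI'[OF ex1_lower_inc_gamma_eq[OF assms]] by (simp add: inv_lower_inc_gamma_def)

lemma convex_on_gamma_quantile:
  fixes \<beta> :: "real \<Rightarrow> real" and \<kappa> \<rho> :: real
  assumes "convex_on I \<beta>" "\<kappa> > 0" "0 < \<rho>" "\<rho> < 1"
  shows "convex_on I (\<lambda>Q. gamma_quantile \<kappa> (\<beta> Q) \<rho>)"
proof -
  have "0 \<le> inv_lower_inc_gamma \<kappa> (Gamma \<kappa> * \<rho>)"
    using assms Gamma_real_pos[of \<kappa>] by (intro inv_lower_inc_gamma_nonneg) auto
  then have "convex_on I (\<lambda>Q. inv_lower_inc_gamma \<kappa> (Gamma \<kappa> * \<rho>) * \<beta> Q)"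
    using assms(1) by (rule convex_on_cmul)
  then show ?thesis unfolding gamma_quantile_def mult.commute[of "\<beta> _"] .
qed

theorem mainTheorem3:
  fixes K \<psi> Emax C :: real and I :: "real set"
  assumes "K > 0" and "\<psi> > 0" and "Emax > 0" and "C > 0"
    and "is_interval I"
    and "\<forall>Q\<in>I. Q > max 1 (C / Emax)"
    and "\<forall>Q\<in>I. 3 * \<psi>^2 * exp \<psi> * Q^2 - 2 * Q * Emax + C \<ge> 0"
  shows "convex_on I (beta_fun K \<psi> Emax C)
    \<and> (\<forall>\<kappa> \<rho>. \<kappa> > 0 \<and> 0 < \<rho> \<and> \<rho> < 1 \<longrightarrow>
          convex_on I (\<lambda>Q. gamma_quantile \<kappa> (beta_fun K \<psi> Emax C Q) \<rho>))"
proof -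
  have Q: "1 < Q" "C / Q < Emax" if "Q \<in> I" for Q
  proof -
    have "1 < Q" "C / Emax < Q" using assms(6) that by auto
    with assms(3) show "1 < Q" "C / Q < Emax" by (simp_all add: field_simps)
  qed
  have "convex_on I (beta_fun K \<psi> Emax C)"
    by (rule convex_on_beta_fun) (use assms(1,2,4) is_interval_convex[OF assms(5)] Q in auto)
  then show ?thesis by (simp add: convex_on_gamma_quantile)
qed

end
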